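(* Let $K$ be a commutative ring with $1$, let $A$ be a $K$-algebra (associative, not necessarily commutative or with $1$), and let $B$ be a $K$-subalgebra of $A$ such that $A/B$ is a finitely presented $K$-module. Then $A$ is finitely generated as a $K$-algebra if and only if $B$ is finitely generated as a $K$-algebra.
   Context: A $K$-algebra is a structure that is simultaneously an associative ring (not necessarily with identity) and a $K$-module, with $K$-bilinear multiplication. It is finitely generated as a $K$-algebra if there is a finite subset $U$ such that the smallest $K$-subalgebra containing $U$ is the whole algebra. *)

theory Defs
  imports Main HOL.Modules
begin

definition K_algebra :: "('k::comm_ring_1 \<Rightarrow> 'a::ring \<Rightarrow> 'a) \<Rightarrow> bool" where
  "K_algebra scale \<longleftrightarrow> module scale \<and>
     (\<forall>r x y. scale r (x * y) = scale r x * y \<and> scale r (x * y) = x * scale r y)"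

definition K_subalgebra :: "('k::comm_ring_1 \<Rightarrow> 'a::ring \<Rightarrow> 'a) \<Rightarrow> 'a set \<Rightarrow> bool" where
  "K_subalgebra scale S \<longleftrightarrow> 0 \<in> S \<and>
     (\<forall>x\<in>S. \<forall>y\<in>S. x + y \<in> S \<and> x * y \<in> S) \<and>
     (\<forall>r. \<forall>x\<in>S. scale r x \<in> S)"

definition K_alg_generated :: "('k::comm_ring_1 \<Rightarrow> 'a::ring \<Rightarrow> 'a) \<Rightarrow> 'a set \<Rightarrow> 'a set" where
  "K_alg_generated scale U = \<Inter> {S. K_subalgebra scale S \<and> U \<subseteq> S}"

definition fin_gen_K_algebra :: "('k::comm_ring_1 \<Rightarrow> 'a::ring \<Rightarrow> 'a) \<Rightarrow> 'a set \<Rightarrow> bool" where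
  "fin_gen_K_algebra scale S \<longleftrightarrow>
     (\<exists>U. finite U \<and> U \<subseteq> S \<and> K_alg_generated scale U = S)"

text \<open>Relation module of the map K^n \<rightarrow> A/B, e_i \<mapsto> a_i + B; elements of K^n are
represented as functions nat \<Rightarrow> 'k vanishing outside {..<n}.\<close>
definition quot_relations ::
  "('k::comm_ring_1 \<Rightarrow> 'a::ring \<Rightarrow> 'a) \<Rightarrow> 'a set \<Rightarrow> nat \<Rightarrow> (nat \<Rightarrow> 'a) \<Rightarrow> (nat \<Rightarrow> 'k) set" where
  "quot_relations scale B n a =
     {c. (\<forall>i\<ge>n. c i = 0) \<and> (\<Sum>i<n. scale (c i) (a i)) \<in> B}"

text \<open>The quotient K-module A/B (A = the whole type) is finitely presented: there is a
surjection K^n \<rightarrow> A/B whose kernel is a finitely generated K-submodule of K^n.\<close>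
definition quot_fin_presented :: "('k::comm_ring_1 \<Rightarrow> 'a::ring \<Rightarrow> 'a) \<Rightarrow> 'a set \<Rightarrow> bool" where
  "quot_fin_presented scale B \<longleftrightarrow>
     (\<exists>n::nat. \<exists>a::nat \<Rightarrow> 'a.
        (\<forall>x. \<exists>c::nat \<Rightarrow> 'k. x - (\<Sum>i<n. scale (c i) (a i)) \<in> B) \<and>
        (\<exists>G::(nat \<Rightarrow> 'k) set. finite G \<and>
           quot_relations scale B n a = {(\<lambda>i. \<Sum>g\<in>G. f g * g i) | f. True}))"

end

theory Submission
  imports Defs
begin

text \<open>
  Choose \<open>a\<^sub>1, \<dots>, a\<^sub>n\<close> whose classes generate \<open>A/B\<close>. If \<open>B\<close> is generated by \<open>U\<close>, then
  \<open>U \<union> {a\<^sub>i}\<close> generates \<open>A\<close>. Conversely, let a finite \<open>Y \<supseteq> {a\<^sub>i}\<close> generate \<open>A\<close>, write every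
  product \<open>w\<close> of at most three elements of \<open>Y\<close> as \<open>b\<^sub>w + m\<^sub>w\<close> with \<open>b\<^sub>w \<in> B\<close> and
  \<open>m\<^sub>w \<in> M = span {a\<^sub>i}\<close>, and let \<open>C\<close> be generated by the \<open>b\<^sub>w\<close> together with the finitely
  many elements \<open>\<Sum> g\<^sub>i a\<^sub>i\<close> given by generators \<open>g\<close> of the relation module. Splitting a
  longer product as (two factors) times (the rest), induction on its length gives \<open>A = C + M\<close>.
  So every \<open>b \<in> B\<close> is \<open>c + m\<close> with \<open>m \<in> B \<inter> M\<close>; such an \<open>m\<close> comes from a relation,
  hence is a combination of the \<open>\<Sum> g\<^sub>i a\<^sub>i\<close>, and lies in \<open>C \<subseteq> B\<close>. Thus \<open>B = C\<close>.
\<close>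

lemma K_subalgebra_K_alg_generated: "K_subalgebra scale (K_alg_generated scale U)"
  unfolding K_alg_generated_def K_subalgebra_def by auto

lemma K_alg_generated_superset: "U \<subseteq> K_alg_generated scale U"
  unfolding K_alg_generated_def by auto

lemma K_alg_generated_least: "K_subalgebra scale S \<Longrightarrow> U \<subseteq> S \<Longrightarrow> K_alg_generated scale U \<subseteq> S"
  unfolding K_alg_generated_def by auto

lemma K_alg_generated_mono: "U \<subseteq> V \<Longrightarrow> K_alg_generated scale U \<subseteq> K_alg_generated scale V"
  unfolding K_alg_generated_def by auto

text \<open>\<^term>\<open>words Y k\<close> is the set of products of \<^emph>\<open>k + 1\<close> elements of \<^term>\<open>Y\<close>.\<close>

fun words :: "'a::ring set \<Rightarrow> nat \<Rightarrow> 'a set" where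
  "words Y 0 = Y"
| "words Y (Suc k) = {y * w | y w. y \<in> Y \<and> w \<in> words Y k}"

lemma words_mult: "u \<in> words Y j \<Longrightarrow> v \<in> words Y k \<Longrightarrow> u * v \<in> words Y (Suc (j + k))"
proof (induction j arbitrary: u)
  case 0
  then show ?case by auto
next
  case (Suc j)
  then obtain y w where "u = y * w" "y \<in> Y" "w \<in> words Y j"
    by auto
  moreover have "w * v \<in> words Y (Suc (j + k))"
    using Suc.IH \<open>w \<in> words Y j\<close> Suc.prems(2) .
  ultimately show ?case
    by (auto simp: mult.assoc)
qed

lemma finite_words: "finite Y \<Longrightarrow> finite (words Y k)"
proof (induction k)
  case (Suc k)
  have "words Y (Suc k) = (\<lambda>(y, w). y * w) ` (Y \<times> words Y k)"
    by auto
  with Suc show ?case by simp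
qed simp

lemma words_Suc_Suc_obtain:
  assumes "w \<in> words Y (Suc (Suc k))"
  obtains u v where "u \<in> words Y 1" "v \<in> words Y k" "w = u * v"
proof -
  from assms obtain y1 y2 v where "w = y1 * (y2 * v)" "y1 \<in> Y" "y2 \<in> Y" "v \<in> words Y k"
    by auto
  then show thesis
    using that[of "y1 * y2" v] by (auto simp: mult.assoc)
qed

lemma words_subset_K_alg_generated: "words Y k \<subseteq> K_alg_generated scale Y"
proof (induction k)
  case 0
  show ?case by (simp add: K_alg_generated_superset)
next
  case (Suc k)
  have "y * w \<in> K_alg_generated scale Y" if "y \<in> Y" "w \<in> K_alg_generated scale Y" for y w
    using that K_alg_generated_superset K_subalgebra_K_alg_generated
    unfolding K_subalgebra_def by blast
  with Suc show ?case by auto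
qed

locale algebra_over = module scale for scale :: "'k::comm_ring_1 \<Rightarrow> 'a::ring \<Rightarrow> 'a" +
  assumes scale_mult_left: "scale r (x * y) = scale r x * y"
    and scale_mult_right: "scale r (x * y) = x * scale r y"

lemma K_algebra_iff_algebra_over: "K_algebra scale \<longleftrightarrow> algebra_over scale"
  unfolding K_algebra_def algebra_over_def algebra_over_axioms_def by blast

context algebra_over
begin

lemma K_subalgebra_iff: "K_subalgebra scale S \<longleftrightarrow> subspace S \<and> (\<forall>x\<in>S. \<forall>y\<in>S. x * y \<in> S)"
  unfolding K_subalgebra_def subspace_def by blast

lemma subspace_set_plus:
  assumes "subspace C" "subspace M"
  shows "subspace {c + m | c m. c \<in> C \<and> m \<in> M}"
proof -
  have "span (C \<union> M) = {c + m | c m. c \<in> C \<and> m \<in> M}"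
    using span_Un[of C M] assms by (simp add: span_eq_iff[THEN iffD2])
  then show ?thesis
    by (metis subspace_span)
qed

lemma mult_span_left_mem:
  assumes "subspace S" "m \<in> span Z" "\<And>z. z \<in> Z \<Longrightarrow> z * x \<in> S"
  shows "m * x \<in> S"
  using assms(2)
proof (rule span_subspace_induct[where P = "{m. m * x \<in> S}", simplified])
  show "subspace {m. m * x \<in> S}"
    using assms(1) unfolding subspace_def by (auto simp: distrib_right scale_mult_left[symmetric])
qed (use assms(3) in blast)

lemma mult_span_right_mem:
  assumes "subspace S" "m \<in> span Z" "\<And>z. z \<in> Z \<Longrightarrow> x * z \<in> S"
  shows "x * m \<in> S"
  using assms(2)
proof (rule span_subspace_induct[where P = "{m. x * m \<in> S}", simplified])
  show "subspace {m. x * m \<in> S}"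
    using assms(1) unfolding subspace_def by (auto simp: distrib_left scale_mult_right[symmetric])
qed (use assms(3) in blast)

lemma K_subalgebra_span_words: "K_subalgebra scale (span (\<Union>k. words Y k))"
proof -
  let ?W = "\<Union>k. words Y k"
  have "x * y \<in> span ?W" if "x \<in> span ?W" "y \<in> span ?W" for x y
  proof (rule mult_span_right_mem[OF subspace_span \<open>y \<in> span ?W\<close>])
    fix w assume "w \<in> ?W"
    show "x * w \<in> span ?W"
    proof (rule mult_span_left_mem[OF subspace_span \<open>x \<in> span ?W\<close>])
      fix w' assume "w' \<in> ?W"
      with \<open>w \<in> ?W\<close> show "w' * w \<in> span ?W"
        by (blast intro: span_base words_mult)
    qed
  qed
  then show ?thesis
    unfolding K_subalgebra_iff by simp
qed

lemma K_alg_generated_eq_span_words: "K_alg_generated scale Y = span (\<Union>k. words Y k)"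
proof
  have "Y \<subseteq> span (\<Union>k. words Y k)"
    by (metis UNIV_I UN_upper span_superset subset_trans words.simps(1))
  then show "K_alg_generated scale Y \<subseteq> span (\<Union>k. words Y k)"
    by (rule K_alg_generated_least[OF K_subalgebra_span_words])
  show "span (\<Union>k. words Y k) \<subseteq> K_alg_generated scale Y"
    using K_subalgebra_K_alg_generated[of scale Y] words_subset_K_alg_generated[of Y]
    by (intro span_minimal) (auto simp: K_subalgebra_iff simp del: words.simps)
qed

lemma words_subset_set_plus_span:
  assumes C: "K_subalgebra scale C" and "Z \<subseteq> Y"
    and short: "\<And>j. j \<le> 2 \<Longrightarrow> words Y j \<subseteq> {c + m | c m. c \<in> C \<and> m \<in> span Z}"
  shows "words Y k \<subseteq> {c + m | c m. c \<in> C \<and> m \<in> span Z}"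
proof (induction k rule: less_induct)
  case (less k)
  txt \<open>Write a long product as \<open>u * v\<close> with \<open>u \<in> words Y 1\<close>: in the expansion of
    \<open>(c\<^sub>u + m\<^sub>u) * (c\<^sub>v + m\<^sub>v)\<close> every term except \<open>c\<^sub>u * c\<^sub>v \<in> C\<close> is a
    combination of shorter products.\<close>
  define D where "D = {c + m | c m. c \<in> C \<and> m \<in> span Z}"
  have D: "subspace D"
    unfolding D_def using C by (intro subspace_set_plus) (auto simp: K_subalgebra_iff)
  have short_D: "words Y 1 \<subseteq> D" "words Y 2 \<subseteq> D"
    using short[of 1] short[of 2] unfolding D_def by (simp_all del: words.simps)
  show ?case
  proof (cases "k \<le> 2")
    case False
    then obtain k' where k: "k = Suc (Suc k')"
      by (metis add_2_eq_Suc le_add_diff_inverse nat_le_linear)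
    show ?thesis
    proof
      fix w assume "w \<in> words Y k"
      then obtain u v where u: "u \<in> words Y 1" and v: "v \<in> words Y k'" and w: "w = u * v"
        using k words_Suc_Suc_obtain by blast
      have "u \<in> D"
        using short_D u by blast
      have "v \<in> D"
        using less.IH[of k'] v k unfolding D_def by auto
      with \<open>u \<in> D\<close> obtain cu mu cv mv where cu: "cu \<in> C" and mu: "mu \<in> span Z" and "u = cu + mu"
        and cv: "cv \<in> C" and mv: "mv \<in> span Z" and "v = cv + mv"
        unfolding D_def by blast
      then have w_eq: "w = cu * cv + (mu * v - mu * mv) + u * mv"
        using w by (simp add: distrib_left distrib_right)
      have "cu * cv + 0 \<in> D"
        using C cu cv span_zero unfolding D_def K_subalgebra_def by blast
      then have "cu * cv \<in> D"
        by simp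
      moreover have "mu * v \<in> D"
      proof (rule mult_span_left_mem[OF D mu])
        fix z assume "z \<in> Z"
        then have "z * v \<in> words Y (Suc (0 + k'))"
          using \<open>Z \<subseteq> Y\<close> v by (intro words_mult) auto
        then show "z * v \<in> D"
          using less.IH k unfolding D_def by force
      qed
      moreover have "mu * mv \<in> D"
      proof (rule mult_span_left_mem[OF D mu])
        fix z assume "z \<in> Z"
        show "z * mv \<in> D"
        proof (rule mult_span_right_mem[OF D mv])
          fix z' assume "z' \<in> Z"
          with \<open>z \<in> Z\<close> have "z * z' \<in> words Y 1"
            using \<open>Z \<subseteq> Y\<close> by auto
          then show "z * z' \<in> D"
            using short_D by blast
        qed
      qed
      moreover have "u * mv \<in> D"
      proof (rule mult_span_right_mem[OF D mv])
        fix z assume "z \<in> Z"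
        then have "u * z \<in> words Y (Suc (1 + 0))"
          using \<open>Z \<subseteq> Y\<close> u by (intro words_mult) auto
        then show "u * z \<in> D"
          using short_D by (simp add: numeral_2_eq_2 subset_iff del: words.simps)
      qed
      ultimately have "w \<in> D"
        unfolding w_eq by (intro subspace_add[OF D] subspace_diff[OF D])
      then show "w \<in> {c + m | c m. c \<in> C \<and> m \<in> span Z}"
        unfolding D_def .
    qed
  qed (rule short)
qed

lemma set_plus_span_eq_UNIV_if_short_words:
  assumes "K_alg_generated scale Y = UNIV" "K_subalgebra scale C" "Z \<subseteq> Y"
    and "\<And>j. j \<le> 2 \<Longrightarrow> words Y j \<subseteq> {c + m | c m. c \<in> C \<and> m \<in> span Z}"
  shows "{c + m | c m. c \<in> C \<and> m \<in> span Z} = UNIV"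
proof -
  have "span (\<Union>k. words Y k) \<subseteq> {c + m | c m. c \<in> C \<and> m \<in> span Z}"
    using assms(2) words_subset_set_plus_span[OF assms(2-4)]
    by (intro span_minimal subspace_set_plus) (auto simp: K_subalgebra_iff simp del: words.simps)
  then show ?thesis
    using assms(1) K_alg_generated_eq_span_words by auto
qed

end

locale quotient_spanning = algebra_over scale for scale :: "'k::comm_ring_1 \<Rightarrow> 'a::ring \<Rightarrow> 'a" +
  fixes B :: "'a set" and n :: nat and a :: "nat \<Rightarrow> 'a"
  assumes K_subalgebra_B: "K_subalgebra scale B"
    and spanning: "\<exists>c. x - (\<Sum>i<n. scale (c i) (a i)) \<in> B"
begin

definition lincomb :: "(nat \<Rightarrow> 'k) \<Rightarrow> 'a" where
  "lincomb c = (\<Sum>i<n. scale (c i) (a i))"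

lemma lincomb_in_span: "lincomb c \<in> span (a ` {..<n})"
  unfolding lincomb_def by (intro span_sum span_scale span_base) auto

lemma lincomb_fun_upd_add: "lincomb (d(i := d i + c)) = lincomb d + scale c (a i)" if "i < n"
proof -
  have "lincomb (d(i := d i + c)) = lincomb d + (\<Sum>j<n. scale (if j = i then c else 0) (a j))"
    unfolding lincomb_def by (auto simp: scale_left_distrib sum.distrib[symmetric] intro!: sum.cong)
  also have "\<dots> = lincomb d + scale c (a i)"
    using that by (simp add: if_distrib[of "\<lambda>r. scale r _"] cong: if_cong)
  finally show ?thesis .
qed

lemma span_generators_obtain_lincomb:
  assumes "y \<in> span (a ` {..<n})"
  obtains d where "\<forall>i\<ge>n. d i = 0" "lincomb d = y"
proof -
  from assms have "\<exists>d. (\<forall>i\<ge>n. d i = 0) \<and> lincomb d = y"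
  proof (induction rule: span_induct_alt)
    case base
    show ?case
      by (intro exI[of _ "\<lambda>_. 0"]) (simp add: lincomb_def)
  next
    case (step c x y)
    then obtain i d where "i < n" "x = a i" "\<forall>i\<ge>n. d i = 0" "lincomb d = y"
      by blast
    then have "lincomb (d(i := d i + c)) = scale c x + y"
      using lincomb_fun_upd_add[of i d c] by (metis add.commute)
    moreover have "\<forall>j\<ge>n. (d(i := d i + c)) j = 0"
      using \<open>i < n\<close> \<open>\<forall>i\<ge>n. d i = 0\<close> by simp
    ultimately show ?case
      by blast
  qed
  then show thesis
    using that by blast
qed

lemma fin_gen_UNIV_if_fin_gen_B:
  assumes "fin_gen_K_algebra scale B"
  shows "fin_gen_K_algebra scale UNIV"
proof -
  obtain U where U: "finite U" "U \<subseteq> B" "K_alg_generated scale U = B"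
    using assms unfolding fin_gen_K_algebra_def by blast
  define S where "S = K_alg_generated scale (U \<union> a ` {..<n})"
  have S: "subspace S"
    unfolding S_def using K_subalgebra_K_alg_generated[of scale "U \<union> a ` {..<n}"]
    by (simp add: K_subalgebra_iff)
  have "B \<subseteq> S"
    unfolding S_def using U(3) K_alg_generated_mono[of U "U \<union> a ` {..<n}" scale] by auto
  have "a ` {..<n} \<subseteq> S"
    unfolding S_def using K_alg_generated_superset[of "U \<union> a ` {..<n}" scale] by blast
  then have "span (a ` {..<n}) \<subseteq> S"
    using S by (rule span_minimal)
  have "x \<in> S" for x
  proof -
    obtain c where "x - lincomb c \<in> B"
      using spanning unfolding lincomb_def by blast
    then have "x - lincomb c + lincomb c \<in> S"
      using \<open>B \<subseteq> S\<close> \<open>span (a ` {..<n}) \<subseteq> S\<close> lincomb_in_span subspace_add[OF S] by blast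
    then show ?thesis
      by simp
  qed
  then show ?thesis
    unfolding fin_gen_K_algebra_def S_def using U(1) by (intro exI[of _ "U \<union> a ` {..<n}"]) auto
qed

end

locale quotient_presentation = quotient_spanning scale B n a
  for scale :: "'k::comm_ring_1 \<Rightarrow> 'a::ring \<Rightarrow> 'a" and B n a +
  fixes G :: "(nat \<Rightarrow> 'k) set"
  assumes finite_G: "finite G"
    and relations_eq: "quot_relations scale B n a = {(\<lambda>i. \<Sum>g\<in>G. f g * g i) | f. True}"
begin

lemma generator_in_quot_relations: "g \<in> quot_relations scale B n a" if "g \<in> G"
proof -
  have "g = (\<lambda>i. \<Sum>h\<in>G. (if h = g then 1 else 0) * h i)"
    using that finite_G by (simp add: if_distrib[of "\<lambda>r. r * _"] cong: if_cong)
  then have "\<exists>f. g = (\<lambda>i. \<Sum>h\<in>G. f h * h i)"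
    by (rule exI[of _ "\<lambda>h. if h = g then 1 else 0"])
  then show ?thesis
    unfolding relations_eq by simp
qed

lemma lincomb_generator_in_B: "g \<in> G \<Longrightarrow> lincomb g \<in> B"
  using generator_in_quot_relations unfolding quot_relations_def lincomb_def by blast

lemma B_inter_span_subset_span_relations: "B \<inter> span (a ` {..<n}) \<subseteq> span (lincomb ` G)"
proof
  fix y assume y: "y \<in> B \<inter> span (a ` {..<n})"
  then obtain d where "\<forall>i\<ge>n. d i = 0" "lincomb d = y"
    using span_generators_obtain_lincomb by blast
  with y have "d \<in> quot_relations scale B n a"
    unfolding quot_relations_def lincomb_def by auto
  then obtain f where d: "d = (\<lambda>i. \<Sum>g\<in>G. f g * g i)"
    unfolding relations_eq by blast
  have "lincomb d = (\<Sum>g\<in>G. scale (f g) (lincomb g))"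
    unfolding d lincomb_def by (simp add: scale_sum_left scale_sum_right sum.swap[of _ "{..<n}"])
  then show "y \<in> span (lincomb ` G)"
    using \<open>lincomb d = y\<close> by (auto intro!: span_sum span_scale intro: span_base)
qed

lemma fin_gen_B_if_fin_gen_UNIV:
  assumes "fin_gen_K_algebra scale UNIV"
  shows "fin_gen_K_algebra scale B"
proof -
  obtain Y where "finite Y" "K_alg_generated scale Y = UNIV"
    using assms unfolding fin_gen_K_algebra_def by blast
  define Z where "Z = a ` {..<n}"
  define Y' where "Y' = Y \<union> Z"
  have gen_Y': "K_alg_generated scale Y' = UNIV"
    using \<open>K_alg_generated scale Y = UNIV\<close> K_alg_generated_mono[of Y Y' scale]
    unfolding Y'_def by auto
  obtain coeff where coeff: "\<And>x. x - lincomb (coeff x) \<in> B"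
    using spanning unfolding lincomb_def by metis
  define T where "T = (\<lambda>w. w - lincomb (coeff w)) ` (\<Union>j\<le>2. words Y' j) \<union> lincomb ` G"
  define C where "C = K_alg_generated scale T"
  have "finite T"
  proof -
    have "finite Y'"
      unfolding Y'_def Z_def using \<open>finite Y\<close> by simp
    then show ?thesis
      unfolding T_def using finite_words finite_G by (blast intro: finite_imageI finite_UN_I)
  qed
  have "T \<subseteq> B"
    unfolding T_def using coeff lincomb_generator_in_B by auto
  then have "C \<subseteq> B"
    unfolding C_def by (rule K_alg_generated_least[OF K_subalgebra_B])
  have C: "K_subalgebra scale C"
    unfolding C_def by (rule K_subalgebra_K_alg_generated)
  have "T \<subseteq> C"
    unfolding C_def by (rule K_alg_generated_superset)
  have short: "words Y' j \<subseteq> {x + m | x m. x \<in> C \<and> m \<in> span Z}" if "j \<le> 2" for j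
  proof
    fix w assume "w \<in> words Y' j"
    then have "w - lincomb (coeff w) \<in> C"
      using that \<open>T \<subseteq> C\<close> unfolding T_def by blast
    moreover have "lincomb (coeff w) \<in> span Z"
      unfolding Z_def by (rule lincomb_in_span)
    ultimately show "w \<in> {x + m | x m. x \<in> C \<and> m \<in> span Z}"
      by (intro CollectI exI[of _ "w - lincomb (coeff w)"] exI[of _ "lincomb (coeff w)"]) simp
  qed
  have C_plus_span: "{x + m | x m. x \<in> C \<and> m \<in> span Z} = UNIV"
    using set_plus_span_eq_UNIV_if_short_words[OF gen_Y' C _ short] unfolding Y'_def by blast
  have "B \<subseteq> C"
  proof
    fix b assume "b \<in> B"
    obtain x m where "b = x + m" "x \<in> C" "m \<in> span Z"
      using C_plus_span by blast
    then have "m \<in> B"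
      using \<open>b \<in> B\<close> \<open>C \<subseteq> B\<close> subspace_diff[of B b x] K_subalgebra_B
      by (auto simp: K_subalgebra_iff)
    with \<open>m \<in> span Z\<close> have "m \<in> span (lincomb ` G)"
      using B_inter_span_subset_span_relations unfolding Z_def by blast
    moreover have "span (lincomb ` G) \<subseteq> C"
      using \<open>T \<subseteq> C\<close> C by (intro span_minimal) (auto simp: T_def K_subalgebra_iff)
    ultimately show "b \<in> C"
      using \<open>b = x + m\<close> \<open>x \<in> C\<close> C subspace_add[of C x m] by (auto simp: K_subalgebra_iff)
  qed
  with \<open>C \<subseteq> B\<close> have "K_alg_generated scale T = B"
    unfolding C_def by blast
  with \<open>finite T\<close> \<open>T \<subseteq> B\<close> show ?thesis
    unfolding fin_gen_K_algebra_def by blast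
qed

end

theorem theorem1p5:
  fixes scale :: "'k::comm_ring_1 \<Rightarrow> 'a::ring \<Rightarrow> 'a"
    and B :: "'a set"
  assumes "K_algebra scale"
    and "K_subalgebra scale B"
    and "quot_fin_presented scale B"
  shows "fin_gen_K_algebra scale (UNIV :: 'a set) \<longleftrightarrow> fin_gen_K_algebra scale B"
proof -
  interpret algebra_over scale
    using assms(1) K_algebra_iff_algebra_over by blast
  obtain n a G where "\<forall>x. \<exists>c. x - (\<Sum>i<n. scale (c i) (a i)) \<in> B" "finite G"
    "quot_relations scale B n a = {(\<lambda>i. \<Sum>g\<in>G. f g * g i) | f. True}"
    using assms(3) unfolding quot_fin_presented_def by blast
  then interpret quotient_presentation scale B n a G
    using assms(2) by unfold_locales blast+
  show ?thesis
    using fin_gen_UNIV_if_fin_gen_B fin_gen_B_if_fin_gen_UNIV by blast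
qed

end
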